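(* Let $m\ge1$, $n\ge1$, $N>2n$, and let $\mathbf y$ be a stationary reciprocal process of order $n$ on $\mathbb Z_N$, with conjugate process $\mathbf d(t)=\mathbf y(t)-\hat{\mathbb E}[\mathbf y(t)\mid\mathbf y(s),s\ne t]$ and $\Delta=\mathbb E\,\mathbf d(t)\mathbf d(t)^\top$. Then $\mathbf y$ is full rank if and only if $\Delta$ is positive definite.
   Context: A process on $\mathbb Z_N$ is a zero-mean second-order $\mathbb R^m$-valued process $\{\mathbf y(t)\}_{t=1}^N$, time indices taken modulo $N$, whose covariance $\boldsymbol\Sigma_N=\mathbb E\,\mathbf y\mathbf y^\top$ is symmetric block-circulant (its $(i,j)$ block depends only on $(i-j)\bmod N$); such a process is stationary, and $\Delta$ does not depend on $t$. Full rank means $\boldsymbol\Sigma_N>0$. $\hat{\mathbb E}[\cdot\mid\cdot]$ is orthogonal projection onto the closed linear span of the scalar components of the conditioning variables. Subspaces $\mathcal A,\mathcal B$ are conditionally orthogonal given $\mathcal C$ if $a-\hat{\mathbb E}[a\mid\mathcal C]$ and $b-\hat{\mathbb E}[b\mid\mathcal C]$ are uncorrelated for all $a\in\mathcal A,b\in\mathcal B$. The process is reciprocal of order $n$ if for every cyclic interval $(t_1,t_2)$ the variables $\{\mathbf y(t):t\in(t_1,t_2)\}$ are conditionally orthogonal to $\{\mathbf y(s):s\notin(t_1,t_2)\}$ given $\mathbf y(t_1-n+1),\dots,\mathbf y(t_1),\mathbf y(t_2),\dots,\mathbf y(t_2+n-1)$. *)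

theory Defs
  imports "HOL-Analysis.Analysis"
begin

text \<open>A zero-mean second-order R^m-valued process on Z_N is modelled abstractly by
  its scalar components y t i (t < N, i < m) as elements of a real inner product
  space (the Hilbert space of zero-mean finite-variance random variables), with
  E[u v] = inner u v.\<close>

definition zmod :: "nat \<Rightarrow> int \<Rightarrow> nat" where
  "zmod N t = nat (t mod int N)"

definition comps :: "nat \<Rightarrow> (nat \<Rightarrow> nat \<Rightarrow> 'h) \<Rightarrow> nat set \<Rightarrow> 'h set" where
  "comps m y T = {y t i | t i. t \<in> T \<and> i < m}"

definition proj :: "'h::real_inner set \<Rightarrow> 'h \<Rightarrow> 'h" where
  "proj S x = (SOME p. p \<in> span S \<and> (\<forall>s\<in>S. inner (x - p) s = 0))"

definition cond_orth :: "'h::real_inner set \<Rightarrow> 'h set \<Rightarrow> 'h set \<Rightarrow> bool" where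
  "cond_orth A B C \<longleftrightarrow>
     (\<forall>a\<in>span A. \<forall>b\<in>span B. inner (a - proj C a) (b - proj C b) = 0)"

definition stationary :: "nat \<Rightarrow> nat \<Rightarrow> (nat \<Rightarrow> nat \<Rightarrow> 'h::real_inner) \<Rightarrow> bool" where
  "stationary N m y \<longleftrightarrow>
     (\<forall>t s t' s'. t < N \<and> s < N \<and> t' < N \<and> s' < N \<and>
        zmod N (int t - int s) = zmod N (int t' - int s') \<longrightarrow>
        (\<forall>i<m. \<forall>j<m. inner (y t i) (y s j) = inner (y t' i) (y s' j)))"

text \<open>Cyclic open interval (t1,t2) = {t1+1, ..., t2-1} mod N (empty if t2 = t1).\<close>
definition cyc_interval :: "nat \<Rightarrow> nat \<Rightarrow> nat \<Rightarrow> nat set" where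
  "cyc_interval N t1 t2 =
     {zmod N (int t1 + int k) | k. 0 < k \<and> k < zmod N (int t2 - int t1)}"

definition boundary :: "nat \<Rightarrow> nat \<Rightarrow> nat \<Rightarrow> nat \<Rightarrow> nat set" where
  "boundary N n t1 t2 =
     {zmod N (int t1 - int k) | k. k < n} \<union> {zmod N (int t2 + int k) | k. k < n}"

definition reciprocal :: "nat \<Rightarrow> nat \<Rightarrow> nat \<Rightarrow> (nat \<Rightarrow> nat \<Rightarrow> 'h::real_inner) \<Rightarrow> bool" where
  "reciprocal N m n y \<longleftrightarrow>
     (\<forall>t1<N. \<forall>t2<N.
        cond_orth (comps m y (cyc_interval N t1 t2))
                  (comps m y ({0..<N} - cyc_interval N t1 t2))
                  (comps m y (boundary N n t1 t2)))"

definition full_rank :: "nat \<Rightarrow> nat \<Rightarrow> (nat \<Rightarrow> nat \<Rightarrow> 'h::real_inner) \<Rightarrow> bool" where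
  "full_rank N m y \<longleftrightarrow>
     (\<forall>c :: nat \<Rightarrow> nat \<Rightarrow> real. (\<exists>t<N. \<exists>i<m. c t i \<noteq> 0) \<longrightarrow>
        (\<Sum>t<N. \<Sum>i<m. \<Sum>s<N. \<Sum>j<m. c t i * c s j * inner (y t i) (y s j)) > 0)"

definition conj_proc :: "nat \<Rightarrow> nat \<Rightarrow> (nat \<Rightarrow> nat \<Rightarrow> 'h::real_inner) \<Rightarrow> nat \<Rightarrow> nat \<Rightarrow> 'h" where
  "conj_proc N m y t i = y t i - proj (comps m y ({0..<N} - {t})) (y t i)"

text \<open>Delta = E d(t) d(t)^T, taken at t = 0 (independent of t by stationarity).\<close>
definition Delta :: "nat \<Rightarrow> nat \<Rightarrow> (nat \<Rightarrow> nat \<Rightarrow> 'h::real_inner) \<Rightarrow> nat \<Rightarrow> nat \<Rightarrow> real" where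
  "Delta N m y i j = inner (conj_proc N m y 0 i) (conj_proc N m y 0 j)"

definition pos_def :: "nat \<Rightarrow> (nat \<Rightarrow> nat \<Rightarrow> real) \<Rightarrow> bool" where
  "pos_def m A \<longleftrightarrow>
     (\<forall>c :: nat \<Rightarrow> real. (\<exists>i<m. c i \<noteq> 0) \<longrightarrow> (\<Sum>i<m. \<Sum>j<m. c i * c j * A i j) > 0)"

end

theory Submission
  imports Defs
begin

text \<open>Both conditions say that the mN scalar components of y are linearly independent.
  For full rank this is immediate. By stationarity the quadratic form of \<open>\<Sigma>\<^sub>N\<close> is
  invariant under cyclic rotation of the coefficients, so independence only has to be tested
  on combinations whose y(0)-coefficients do not all vanish, i.e. it says that no nontrivial
  combination of y(0) lies in the span of the other components. Since d(0) is the residual of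
  y(0) after projection onto that span, this happens exactly when no nontrivial combination
  of d(0) vanishes, which is positive definiteness of the Gram matrix \<open>\<Delta>\<close>.\<close>

lemma inner_eq_0_on_span:
  assumes "\<And>s. s \<in> S \<Longrightarrow> inner z s = 0" and "w \<in> span S"
  shows "inner z w = 0"
  using orthogonal_to_span[OF assms(2), of z] assms(1) by (simp add: orthogonal_def)

lemma orthogonal_projection_exists:
  fixes S :: "'h::real_inner set"
  assumes "finite S"
  shows "\<exists>p\<in>span S. \<forall>s\<in>S. inner (x - p) s = 0"
  using assms
proof (induction S arbitrary: x)
  case empty
  show ?case by (auto intro: span_zero)
next
  case (insert a S)
  obtain p where p: "p \<in> span S" "\<And>s. s \<in> S \<Longrightarrow> inner (x - p) s = 0"
    using insert.IH by blast
  obtain q where q: "q \<in> span S" "\<And>s. s \<in> S \<Longrightarrow> inner (a - q) s = 0"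
    using insert.IH by blast
  have span_S: "span S \<subseteq> span (insert a S)"
    by (simp add: span_mono subset_insertI)
  have x_p_q: "inner (x - p) q = 0" and a_q_q: "inner (a - q) q = 0"
    using inner_eq_0_on_span[OF _ q(1)] p(2) q(2) by blast+
  define r where "r = a - q"
  show ?case
  proof (cases "r = 0")
    case True
    then have "inner (x - p) a = 0"
      using x_p_q by (simp add: r_def)
    then show ?thesis
      using p span_S by auto
  next
    case False
    \<comment> \<open>Gram--Schmidt: correct p along the component r of a orthogonal to S.\<close>
    define k where "k = inner (x - p) r / inner r r"
    have "r \<in> span (insert a S)"
      unfolding r_def using q(1) span_S by (meson insertI1 span_base span_diff subsetD)
    then have "p + k *\<^sub>R r \<in> span (insert a S)"
      using p(1) span_S by (meson span_add span_mul subsetD)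
    moreover have "inner (x - (p + k *\<^sub>R r)) s = 0" if "s \<in> S" for s
      using p(2)[OF that] q(2)[OF that] by (simp add: r_def inner_diff_left inner_add_left)
    moreover have "inner (x - (p + k *\<^sub>R r)) a = 0"
    proof -
      have "inner (x - (p + k *\<^sub>R r)) a
          = inner (x - p) r - k * inner r r + (inner (x - p) q - k * inner r q)"
        unfolding r_def by (simp add: inner_diff_left inner_diff_right algebra_simps)
      then show ?thesis
        using x_p_q a_q_q False by (simp add: k_def r_def)
    qed
    ultimately show ?thesis
      by auto
  qed
qed

lemma
  fixes S :: "'h::real_inner set"
  assumes "finite S"
  shows proj_in_span: "proj S x \<in> span S"
    and inner_proj_residual_span: "w \<in> span S \<Longrightarrow> inner (x - proj S x) w = 0"
proof -
  have "proj S x \<in> span S \<and> (\<forall>s\<in>S. inner (x - proj S x) s = 0)"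
    unfolding proj_def by (rule someI_ex) (use orthogonal_projection_exists[OF assms] in blast)
  then show "proj S x \<in> span S" and "w \<in> span S \<Longrightarrow> inner (x - proj S x) w = 0"
    using inner_eq_0_on_span by blast+
qed

lemma residual_combination_eq_0_iff:
  fixes x :: "'i \<Rightarrow> 'h::real_inner"
  assumes "finite S"
  shows "(\<Sum>i\<in>I. c i *\<^sub>R (x i - proj S (x i))) = 0 \<longleftrightarrow> (\<Sum>i\<in>I. c i *\<^sub>R x i) \<in> span S"
proof -
  define u where "u = (\<Sum>i\<in>I. c i *\<^sub>R (x i - proj S (x i)))"
  define p where "p = (\<Sum>i\<in>I. c i *\<^sub>R proj S (x i))"
  have u_eq: "u = (\<Sum>i\<in>I. c i *\<^sub>R x i) - p"
    unfolding u_def p_def by (simp add: scaleR_diff_right sum_subtractf)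
  have p_span: "p \<in> span S"
    unfolding p_def using proj_in_span[OF assms] by (intro span_sum span_mul)
  have u_orth: "inner u w = 0" if "w \<in> span S" for w
    unfolding u_def using inner_proj_residual_span[OF assms that]
    by (simp add: inner_sum_left)
  show ?thesis
    unfolding u_def[symmetric]
  proof
    assume "u = 0"
    then show "(\<Sum>i\<in>I. c i *\<^sub>R x i) \<in> span S"
      using u_eq p_span by simp
  next
    assume "(\<Sum>i\<in>I. c i *\<^sub>R x i) \<in> span S"
    then have "u \<in> span S"
      using u_eq p_span by (simp add: span_diff)
    then show "u = 0"
      using u_orth[of u] by simp
  qed
qed

lemma span_image_finite_sum:
  assumes "finite A" and "x \<in> span (f ` A)"
  shows "\<exists>c. x = (\<Sum>a\<in>A. c a *\<^sub>R f a)"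
  using assms(2)
proof (induction rule: span_induct_alt)
  case base
  show ?case by (auto intro: exI[of _ "\<lambda>_. 0"])
next
  case (step k z x)
  obtain b where "z = f b" "b \<in> A"
    using step.hyps(1) by blast
  moreover obtain c where "x = (\<Sum>a\<in>A. c a *\<^sub>R f a)"
    using step.IH by blast
  moreover have "(\<Sum>a\<in>A. (if a = b then k else 0) *\<^sub>R f a) = k *\<^sub>R f b"
    using assms(1) \<open>b \<in> A\<close> by (simp add: if_distrib[of "\<lambda>r. r *\<^sub>R _"] sum.delta cong: if_cong)
  ultimately have "k *\<^sub>R z + x = (\<Sum>a\<in>A. (c a + (if a = b then k else 0)) *\<^sub>R f a)"
    by (simp add: scaleR_add_left sum.distrib)
  then show ?case
    by (rule exI[where x = "\<lambda>a. c a + (if a = b then k else 0)"])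
qed

lemma comps_eq_image: "comps m y T = (\<lambda>(t, i). y t i) ` (T \<times> {..<m})"
  unfolding comps_def by auto

lemma finite_comps: "finite T \<Longrightarrow> finite (comps m y T)"
  by (simp add: comps_eq_image)

lemma span_comps_finite_sum:
  fixes y :: "nat \<Rightarrow> nat \<Rightarrow> 'h::real_inner"
  assumes "finite T" and "x \<in> span (comps m y T)"
  shows "\<exists>a. x = (\<Sum>t\<in>T. \<Sum>i<m. a t i *\<^sub>R y t i)"
proof -
  obtain a where "x = (\<Sum>(t, i)\<in>T \<times> {..<m}. a (t, i) *\<^sub>R y t i)"
    using span_image_finite_sum[of "T \<times> {..<m}"] assms
    by (fastforce simp: comps_eq_image case_prod_beta)
  then show ?thesis
    by (auto simp: sum.cartesian_product intro: exI[of _ "curry a"])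
qed

lemma inner_double_sum_expand:
  fixes y :: "'t \<Rightarrow> 'i \<Rightarrow> 'h::real_inner"
  shows "inner (\<Sum>t\<in>T. \<Sum>i\<in>I. c t i *\<^sub>R y t i) (\<Sum>s\<in>T. \<Sum>j\<in>I. d s j *\<^sub>R y s j)
     = (\<Sum>t\<in>T. \<Sum>i\<in>I. \<Sum>s\<in>T. \<Sum>j\<in>I. c t i * d s j * inner (y t i) (y s j))"
  unfolding inner_sum_left unfolding inner_sum_right
  by (simp add: sum_distrib_left mult.assoc mult.left_commute)

lemma full_rank_iff_independent:
  "full_rank N m y \<longleftrightarrow>
     (\<forall>c. (\<Sum>t<N. \<Sum>i<m. c t i *\<^sub>R y t i) = 0 \<longrightarrow> (\<forall>t<N. \<forall>i<m. c t i = 0))"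
  unfolding full_rank_def inner_double_sum_expand[symmetric] by auto

lemma pos_def_gram_iff_independent:
  fixes x :: "nat \<Rightarrow> 'h::real_inner"
  shows "pos_def m (\<lambda>i j. inner (x i) (x j)) \<longleftrightarrow>
     (\<forall>c. (\<Sum>i<m. c i *\<^sub>R x i) = 0 \<longrightarrow> (\<forall>i<m. c i = 0))"
proof -
  have "(\<Sum>i<m. \<Sum>j<m. c i * c j * inner (x i) (x j))
      = inner (\<Sum>i<m. c i *\<^sub>R x i) (\<Sum>i<m. c i *\<^sub>R x i)" for c
    unfolding inner_sum_left unfolding inner_sum_right
    by (simp add: sum_distrib_left mult.assoc mult.left_commute inner_commute)
  then show ?thesis
    unfolding pos_def_def by auto
qed

lemma sum_rotate:
  fixes g :: "nat \<Rightarrow> 'a::comm_monoid_add"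
  assumes "k < N"
  shows "(\<Sum>t<N. g ((t + k) mod N)) = (\<Sum>t<N. g t)"
proof (rule sum.reindex_bij_witness[where i = "\<lambda>t. (t + (N - k)) mod N" and j = "\<lambda>t. (t + k) mod N"])
  fix a assume "a \<in> {..<N}"
  then show "((a + k) mod N + (N - k)) mod N = a" and "((a + (N - k)) mod N + k) mod N = a"
    using assms
    by (metis add.assoc le_add_diff_inverse lessThan_iff less_imp_le_nat mod_add_left_eq mod_add_self2 mod_less,
        metis add.assoc le_add_diff_inverse2 lessThan_iff less_imp_le_nat mod_add_left_eq mod_add_self2 mod_less)
qed auto

lemma zmod_rotate:
  "zmod N (int ((t + k) mod N) - int ((s + k) mod N)) = zmod N (int t - int s)"
proof -
  have "(int ((t + k) mod N) - int ((s + k) mod N)) mod int N = (int (t + k) - int (s + k)) mod int N"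
    by (simp add: of_nat_mod mod_diff_eq)
  then show ?thesis
    unfolding zmod_def by simp
qed

lemma sum_rotate2:
  fixes F :: "nat \<Rightarrow> nat \<Rightarrow> 'a::comm_monoid_add"
  assumes "k < N"
  shows "(\<Sum>t<N. \<Sum>s<N. F ((t + k) mod N) ((s + k) mod N)) = (\<Sum>t<N. \<Sum>s<N. F t s)"
  using sum_rotate[OF assms, of "\<lambda>t. \<Sum>s<N. F t ((s + k) mod N)"] sum_rotate[OF assms, of "F t" for t]
  by simp

lemma stationary_inner_combinations:
  fixes y :: "nat \<Rightarrow> nat \<Rightarrow> 'h::real_inner"
  assumes "stationary N m y" and "t < N" "s < N" "t' < N" "s' < N"
    and "zmod N (int t - int s) = zmod N (int t' - int s')"
  shows "inner (\<Sum>i<m. a i *\<^sub>R y t i) (\<Sum>j<m. b j *\<^sub>R y s j)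
       = inner (\<Sum>i<m. a i *\<^sub>R y t' i) (\<Sum>j<m. b j *\<^sub>R y s' j)"
proof -
  have "inner (y t i) (y s j) = inner (y t' i) (y s' j)" if "i < m" "j < m" for i j
    using assms that unfolding stationary_def by blast
  then show ?thesis
    by (simp add: inner_sum_left inner_sum_right)
qed

lemma stationary_norm_rotate:
  fixes y :: "nat \<Rightarrow> nat \<Rightarrow> 'h::real_inner"
  assumes "stationary N m y" and "k < N"
  shows "norm (\<Sum>t<N. \<Sum>i<m. c ((t + k) mod N) i *\<^sub>R y t i) = norm (\<Sum>t<N. \<Sum>i<m. c t i *\<^sub>R y t i)"
proof -
  let ?\<rho> = "\<lambda>t. (t + k) mod N"
  define H where "H t s = inner (\<Sum>i<m. c t i *\<^sub>R y t i) (\<Sum>j<m. c s j *\<^sub>R y s j)" for t s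
  have "inner (\<Sum>t<N. \<Sum>i<m. c (?\<rho> t) i *\<^sub>R y t i) (\<Sum>s<N. \<Sum>j<m. c (?\<rho> s) j *\<^sub>R y s j)
      = (\<Sum>t<N. \<Sum>s<N. inner (\<Sum>i<m. c (?\<rho> t) i *\<^sub>R y t i) (\<Sum>j<m. c (?\<rho> s) j *\<^sub>R y s j))"
    unfolding inner_sum_left[where A = "{..<N}"] unfolding inner_sum_right[where A = "{..<N}"] ..
  also have "\<dots> = (\<Sum>t<N. \<Sum>s<N. H (?\<rho> t) (?\<rho> s))"
    unfolding H_def using assms zmod_rotate[of N _ k]
    by (intro sum.cong refl stationary_inner_combinations) auto
  also have "\<dots> = (\<Sum>t<N. \<Sum>s<N. H t s)"
    by (rule sum_rotate2[OF assms(2)])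
  also have "\<dots> = inner (\<Sum>t<N. \<Sum>i<m. c t i *\<^sub>R y t i) (\<Sum>s<N. \<Sum>j<m. c s j *\<^sub>R y s j)"
    unfolding H_def unfolding inner_sum_left[where A = "{..<N}"] unfolding inner_sum_right[where A = "{..<N}"] ..
  finally show ?thesis
    unfolding norm_eq_sqrt_inner by simp
qed

lemma stationary_independent_iff_at_0:
  fixes y :: "nat \<Rightarrow> nat \<Rightarrow> 'h::real_inner"
  assumes "stationary N m y" and "0 < N"
  shows "(\<forall>c. (\<Sum>t<N. \<Sum>i<m. c t i *\<^sub>R y t i) = 0 \<longrightarrow> (\<forall>t<N. \<forall>i<m. c t i = 0)) \<longleftrightarrow>
         (\<forall>c. (\<Sum>t<N. \<Sum>i<m. c t i *\<^sub>R y t i) = 0 \<longrightarrow> (\<forall>i<m. c 0 i = 0))"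
proof (intro iffI allI impI)
  fix c :: "nat \<Rightarrow> nat \<Rightarrow> real" and t i
  assume at_0: "\<forall>c. (\<Sum>t<N. \<Sum>i<m. c t i *\<^sub>R y t i) = 0 \<longrightarrow> (\<forall>i<m. c 0 i = 0)"
    and "(\<Sum>t<N. \<Sum>i<m. c t i *\<^sub>R y t i) = 0" and "t < N" "i < m"
  then have "(\<Sum>s<N. \<Sum>j<m. c ((s + t) mod N) j *\<^sub>R y s j) = 0"
    using stationary_norm_rotate[OF assms(1), of t c] by simp
  then show "c t i = 0"
    using at_0 \<open>t < N\<close> \<open>i < m\<close> by fastforce
qed (use assms(2) in blast)

lemma independent_at_iff_not_in_span:
  fixes y :: "nat \<Rightarrow> nat \<Rightarrow> 'h::real_inner"
  assumes "t\<^sub>0 < N"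
  shows "(\<forall>c. (\<Sum>t<N. \<Sum>i<m. c t i *\<^sub>R y t i) = 0 \<longrightarrow> (\<forall>i<m. c t\<^sub>0 i = 0)) \<longleftrightarrow>
         (\<forall>c. (\<Sum>i<m. c i *\<^sub>R y t\<^sub>0 i) \<in> span (comps m y ({0..<N} - {t\<^sub>0})) \<longrightarrow> (\<forall>i<m. c i = 0))"
    (is "?independent \<longleftrightarrow> ?not_in_span")
proof -
  let ?R = "{0..<N} - {t\<^sub>0}"
  have split: "(\<Sum>t<N. f t) = f t\<^sub>0 + (\<Sum>t\<in>?R. f t)" for f :: "nat \<Rightarrow> 'h"
    using assms by (simp add: lessThan_atLeast0 sum.remove)
  show ?thesis
  proof
    assume ?independent
    show ?not_in_span
    proof (intro allI impI)
      fix c i assume "(\<Sum>i<m. c i *\<^sub>R y t\<^sub>0 i) \<in> span (comps m y ?R)" and "i < m"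
      then obtain a where a: "(\<Sum>i<m. c i *\<^sub>R y t\<^sub>0 i) = (\<Sum>t\<in>?R. \<Sum>i<m. a t i *\<^sub>R y t i)"
        using span_comps_finite_sum[of ?R] by blast
      define C where "C t i = (if t = t\<^sub>0 then c i else - a t i)" for t i
      have "(\<Sum>t<N. \<Sum>i<m. C t i *\<^sub>R y t i) = 0"
        unfolding split C_def by (simp add: a sum_negf)
      then show "c i = 0"
        using \<open>?independent\<close> \<open>i < m\<close> assms by (fastforce simp: C_def)
    qed
  next
    assume ?not_in_span
    show ?independent
    proof (intro allI impI)
      fix c i assume "(\<Sum>t<N. \<Sum>i<m. c t i *\<^sub>R y t i) = 0" and "i < m"
      then have "(\<Sum>i<m. c t\<^sub>0 i *\<^sub>R y t\<^sub>0 i) = - (\<Sum>t\<in>?R. \<Sum>i<m. c t i *\<^sub>R y t i)"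
        unfolding split by (simp add: eq_neg_iff_add_eq_0)
      moreover have "(\<Sum>t\<in>?R. \<Sum>i<m. c t i *\<^sub>R y t i) \<in> span (comps m y ?R)"
        unfolding comps_def by (intro span_sum span_mul span_base) blast
      ultimately show "c t\<^sub>0 i = 0"
        using \<open>?not_in_span\<close> \<open>i < m\<close> by (simp add: span_neg)
    qed
  qed
qed

theorem proposition2:
  fixes y :: "nat \<Rightarrow> nat \<Rightarrow> 'h::real_inner" and m n N :: nat
  assumes "m \<ge> 1" and "n \<ge> 1" and "N > 2 * n"
    and "stationary N m y"
    and "reciprocal N m n y"
  shows "full_rank N m y \<longleftrightarrow> pos_def m (Delta N m y)"
proof -
  define S where "S = comps m y ({0..<N} - {0})"
  have "finite S"
    unfolding S_def by (simp add: finite_comps)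
  have Delta_gram: "Delta N m y = (\<lambda>i j. inner (y 0 i - proj S (y 0 i)) (y 0 j - proj S (y 0 j)))"
    unfolding Delta_def conj_proc_def S_def ..
  have "full_rank N m y \<longleftrightarrow>
      (\<forall>c. (\<Sum>t<N. \<Sum>i<m. c t i *\<^sub>R y t i) = 0 \<longrightarrow> (\<forall>i<m. c 0 i = 0))"
    unfolding full_rank_iff_independent using assms(3) by (intro stationary_independent_iff_at_0[OF assms(4)]) simp
  also have "\<dots> \<longleftrightarrow> (\<forall>c. (\<Sum>i<m. c i *\<^sub>R y 0 i) \<in> span S \<longrightarrow> (\<forall>i<m. c i = 0))"
    unfolding S_def using assms(3) by (intro independent_at_iff_not_in_span) simp
  also have "\<dots> \<longleftrightarrow> (\<forall>c. (\<Sum>i<m. c i *\<^sub>R (y 0 i - proj S (y 0 i))) = 0 \<longrightarrow> (\<forall>i<m. c i = 0))"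
    unfolding residual_combination_eq_0_iff[OF \<open>finite S\<close>] ..
  also have "\<dots> \<longleftrightarrow> pos_def m (Delta N m y)"
    unfolding Delta_gram pos_def_gram_iff_independent ..
  finally show ?thesis .
qed

end
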